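(* For the asynchronous Sinkhorn iteration described in the context, the iterates $(u^{(\ell)},v^{(\ell)})$ converge to a solution $(u,v)\in\mathbb R_{++}^X\times\mathbb R_{++}^Y$ of the scaling problem, i.e. $\mathrm{diag}(u)K\mathrm{diag}(v)$ has row sums $\mu$ and column sums $\nu$, and $q^{(\ell)}\to1$.
   Context: $X,Y$ finite sets, $\mu\in\mathcal P(X)$, $\nu\in\mathcal P(Y)$ with strictly positive entries, $c\in\mathbb R_+^{X\times Y}$, $\varepsilon>0$, kernel $K(x,y)=\exp(-c(x,y)/\varepsilon)\mu(x)\nu(y)$. Asynchronous Sinkhorn iteration: given $v^{(0)}\in\mathbb R_{++}^Y$, for $\ell\ge0$: $u^{(\ell+1)}=\mu\oslash(Kv^{(\ell)})$, $\hat v^{(\ell+1)}=\nu\oslash(K^\top u^{(\ell+1)})$, $v^{(\ell+1)}=\min\{v^{(\ell)},\hat v^{(\ell+1)}\}$ componentwise, $\pi^{(\ell+1)}=\mathrm{diag}(u^{(\ell+1)})K\mathrm{diag}(v^{(\ell+1)})$, $q^{(\ell+1)}=\sum_{x,y}\pi^{(\ell+1)}(x,y)$; $\oslash$ is componentwise division. *)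

theory Defs
  imports "HOL-Analysis.Analysis"
begin

definition kernel :: "('x \<Rightarrow> real) \<Rightarrow> ('y \<Rightarrow> real) \<Rightarrow> ('x \<Rightarrow> 'y \<Rightarrow> real) \<Rightarrow> real
                      \<Rightarrow> 'x \<Rightarrow> 'y \<Rightarrow> real" where
  "kernel \<mu> \<nu> c \<epsilon> x y = exp (- c x y / \<epsilon>) * \<mu> x * \<nu> y"

definition u_upd :: "('x::finite \<Rightarrow> real) \<Rightarrow> ('x \<Rightarrow> 'y::finite \<Rightarrow> real) \<Rightarrow> ('y \<Rightarrow> real) \<Rightarrow> 'x \<Rightarrow> real" where
  "u_upd \<mu> K v x = \<mu> x / (\<Sum>y\<in>UNIV. K x y * v y)"

definition v_upd :: "('y::finite \<Rightarrow> real) \<Rightarrow> ('x::finite \<Rightarrow> 'y \<Rightarrow> real) \<Rightarrow> ('x \<Rightarrow> real) \<Rightarrow> 'y \<Rightarrow> real" where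
  "v_upd \<nu> K u y = \<nu> y / (\<Sum>x\<in>UNIV. K x y * u x)"

primrec async_v :: "('x::finite \<Rightarrow> real) \<Rightarrow> ('y::finite \<Rightarrow> real) \<Rightarrow> ('x \<Rightarrow> 'y \<Rightarrow> real)
                    \<Rightarrow> ('y \<Rightarrow> real) \<Rightarrow> nat \<Rightarrow> 'y \<Rightarrow> real" where
  "async_v \<mu> \<nu> K v0 0 = v0"
| "async_v \<mu> \<nu> K v0 (Suc l) =
     (let u = u_upd \<mu> K (async_v \<mu> \<nu> K v0 l)
      in (\<lambda>y. min (async_v \<mu> \<nu> K v0 l y) (v_upd \<nu> K u y)))"

text \<open>u^(l+1) = mu ./ (K v^(l)); async_u ... l denotes u^(l+1).\<close>
definition async_u :: "('x::finite \<Rightarrow> real) \<Rightarrow> ('y::finite \<Rightarrow> real) \<Rightarrow> ('x \<Rightarrow> 'y \<Rightarrow> real)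
                    \<Rightarrow> ('y \<Rightarrow> real) \<Rightarrow> nat \<Rightarrow> 'x \<Rightarrow> real" where
  "async_u \<mu> \<nu> K v0 l = u_upd \<mu> K (async_v \<mu> \<nu> K v0 l)"

text \<open>q^(l+1) = total mass of diag(u^(l+1)) K diag(v^(l+1)).\<close>
definition async_q :: "('x::finite \<Rightarrow> real) \<Rightarrow> ('y::finite \<Rightarrow> real) \<Rightarrow> ('x \<Rightarrow> 'y \<Rightarrow> real)
                    \<Rightarrow> ('y \<Rightarrow> real) \<Rightarrow> nat \<Rightarrow> real" where
  "async_q \<mu> \<nu> K v0 l =
     (\<Sum>x\<in>UNIV. \<Sum>y\<in>UNIV. async_u \<mu> \<nu> K v0 l x * K x y * async_v \<mu> \<nu> K v0 (Suc l) y)"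

end

theory Submission
  imports Defs
begin

text \<open>
  Write \<open>T v = \<nu> / K\<^sup>T(\<mu> / K v)\<close>; the iteration is \<open>v \<mapsto> min v (T v)\<close>, and \<open>T\<close> is monotone
  and positively homogeneous. A positive fixed point \<open>w\<close> of \<open>T\<close> exists: the dual potential
  \<open>\<Phi> v = \<Sum>\<^sub>x \<mu> x ln (K v) x - \<Sum>\<^sub>y \<nu> y ln (v y)\<close> is scale invariant and coercive on vectors with
  maximum 1, so it attains its minimum, and a minimiser satisfies \<open>w \<le> T w\<close> because otherwise
  \<open>min w (T w)\<close> would strictly decrease \<open>\<Phi>\<close>. Mass conservation turns every positive
  sub-fixed point \<open>v \<le> T v\<close> into a fixed point. Scaling \<open>w\<close> below \<open>v\<^sup>(\<^sup>0\<^sup>)\<close>, monotonicity keeps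
  the decreasing iterates above \<open>t w\<close>, so they converge to a positive sub-fixed point, i.e. a
  fixed point; the convergence of \<open>u\<^sup>(\<^sup>\<ell>\<^sup>)\<close> and \<open>q\<^sup>(\<^sup>\<ell>\<^sup>)\<close> follows by continuity.
\<close>

lemma ln_less_minus_one: "(x::real) > 1 \<Longrightarrow> ln x < x - 1"
  by (smt (verit) ln_eq_minus_one ln_le_minus_one)

lemma compact_function_box: "compact (PiE (UNIV::'a::finite set) (\<lambda>_. {a..b::real}))"
proof -
  have "compactin (product_topology (\<lambda>_. euclidean) UNIV) (PiE (UNIV::'a set) (\<lambda>_. {a..b}))"
    by (simp add: compactin_PiE)
  then show ?thesis by (simp add: euclidean_product_topology)
qed

locale sinkhorn_scaling =
  fixes \<mu> :: "'x::finite \<Rightarrow> real" and \<nu> :: "'y::finite \<Rightarrow> real" and K :: "'x \<Rightarrow> 'y \<Rightarrow> real"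
  assumes \<mu>_pos: "\<And>x. \<mu> x > 0" and \<nu>_pos: "\<And>y. \<nu> y > 0"
    and \<mu>_sum: "(\<Sum>x\<in>UNIV. \<mu> x) = 1" and \<nu>_sum: "(\<Sum>y\<in>UNIV. \<nu> y) = 1"
    and K_pos: "\<And>x y. K x y > 0"
begin

definition Kv :: "('y \<Rightarrow> real) \<Rightarrow> 'x \<Rightarrow> real" where
  "Kv v x = (\<Sum>y\<in>UNIV. K x y * v y)"

definition KTu :: "('x \<Rightarrow> real) \<Rightarrow> 'y \<Rightarrow> real" where
  "KTu u y = (\<Sum>x\<in>UNIV. K x y * u x)"

definition sinkhorn_map :: "('y \<Rightarrow> real) \<Rightarrow> 'y \<Rightarrow> real" where
  "sinkhorn_map v = v_upd \<nu> K (u_upd \<mu> K v)"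

definition dual_potential :: "('y \<Rightarrow> real) \<Rightarrow> real" where
  "dual_potential v = (\<Sum>x\<in>UNIV. \<mu> x * ln (Kv v x)) - (\<Sum>y\<in>UNIV. \<nu> y * ln (v y))"

lemma u_upd_eq: "u_upd \<mu> K v x = \<mu> x / Kv v x"
  by (simp add: u_upd_def Kv_def)

lemma sinkhorn_map_eq: "sinkhorn_map v y = \<nu> y / KTu (u_upd \<mu> K v) y"
  by (simp add: sinkhorn_map_def v_upd_def KTu_def)

lemma Kv_pos: "(\<And>y. v y > 0) \<Longrightarrow> Kv v x > 0"
  unfolding Kv_def by (rule sum_pos) (auto intro: mult_pos_pos K_pos)

lemma KTu_pos: "(\<And>x. u x > 0) \<Longrightarrow> KTu u y > 0"
  unfolding KTu_def by (rule sum_pos) (auto intro: mult_pos_pos K_pos)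

lemma u_upd_pos: "(\<And>y. v y > 0) \<Longrightarrow> u_upd \<mu> K v x > 0"
  unfolding u_upd_eq using Kv_pos \<mu>_pos by (simp add: divide_pos_pos)

lemma KTu_u_upd_pos: "(\<And>y. v y > 0) \<Longrightarrow> KTu (u_upd \<mu> K v) y > 0"
  by (intro KTu_pos u_upd_pos) auto

lemma sinkhorn_map_pos: "(\<And>y. v y > 0) \<Longrightarrow> sinkhorn_map v y > 0"
  unfolding sinkhorn_map_eq using KTu_u_upd_pos \<nu>_pos by (simp add: divide_pos_pos)

lemma sum_KTu_mult: "(\<Sum>y\<in>UNIV. KTu u y * v y) = (\<Sum>x\<in>UNIV. u x * Kv v x)"
  unfolding KTu_def Kv_def sum_distrib_left sum_distrib_right
  by (subst sum.swap) (simp add: algebra_simps)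

lemma u_upd_mult_Kv: "(\<And>y. v y > 0) \<Longrightarrow> u_upd \<mu> K v x * Kv v x = \<mu> x"
  unfolding u_upd_eq using Kv_pos[of v x] by simp

lemma KTu_mult_sinkhorn_map: "(\<And>y. v y > 0) \<Longrightarrow> KTu (u_upd \<mu> K v) y * sinkhorn_map v y = \<nu> y"
  unfolding sinkhorn_map_eq using KTu_u_upd_pos[of v y] by simp

lemma sinkhorn_map_mono:
  assumes v_pos: "\<And>y. v y > 0" and le: "\<And>y. v y \<le> w y"
  shows "sinkhorn_map v y \<le> sinkhorn_map w y"
proof -
  have w_pos: "\<And>y. w y > 0" using v_pos le by (meson less_le_trans)
  have "Kv v x \<le> Kv w x" for x
    unfolding Kv_def by (rule sum_mono) (simp add: le K_pos less_imp_le mult_left_mono)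
  then have "u_upd \<mu> K w x \<le> u_upd \<mu> K v x" for x
    unfolding u_upd_eq using \<mu>_pos[of x] Kv_pos[of v x, OF v_pos] Kv_pos[of w x, OF w_pos]
    by (intro divide_left_mono) (auto intro: less_imp_le mult_pos_pos)
  then have "KTu (u_upd \<mu> K w) y \<le> KTu (u_upd \<mu> K v) y"
    unfolding KTu_def by (intro sum_mono) (simp add: K_pos less_imp_le mult_left_mono)
  then show ?thesis
    unfolding sinkhorn_map_eq using KTu_u_upd_pos[of w y, OF w_pos] KTu_u_upd_pos[of v y, OF v_pos] \<nu>_pos[of y]
    by (intro divide_left_mono) (auto intro: less_imp_le mult_pos_pos)
qed

lemma sinkhorn_map_scale:
  assumes "t > 0" shows "sinkhorn_map (\<lambda>y. t * v y) y = t * sinkhorn_map v y"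
proof -
  have "Kv (\<lambda>y. t * v y) x = t * Kv v x" for x
    unfolding Kv_def by (simp add: sum_distrib_left algebra_simps)
  then have "KTu (u_upd \<mu> K (\<lambda>y. t * v y)) y = KTu (u_upd \<mu> K v) y / t"
    unfolding KTu_def u_upd_eq by (simp add: sum_divide_distrib mult.commute)
  then show ?thesis unfolding sinkhorn_map_eq using assms by simp
qed

text \<open>Both \<open>v\<close> and \<open>sinkhorn_map v\<close> have total mass 1 against \<open>K\<^sup>Tu\<close>, \<open>u = \<mu> / K v\<close>.\<close>

lemma sinkhorn_map_fixed_if_le:
  assumes v_pos: "\<And>y. v y > 0" and le: "\<And>y. v y \<le> sinkhorn_map v y"
  shows "sinkhorn_map v y = v y"
proof -
  let ?w = "KTu (u_upd \<mu> K v)"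
  have "(\<Sum>y\<in>UNIV. ?w y * v y) = 1"
    unfolding sum_KTu_mult using u_upd_mult_Kv[of v, OF v_pos] \<mu>_sum by simp
  moreover have "(\<Sum>y\<in>UNIV. ?w y * sinkhorn_map v y) = 1"
    using KTu_mult_sinkhorn_map[of v, OF v_pos] \<nu>_sum by simp
  ultimately have "(\<Sum>y\<in>UNIV. ?w y * (sinkhorn_map v y - v y)) = 0"
    by (simp add: right_diff_distrib sum_subtractf)
  moreover have "\<forall>y\<in>UNIV. 0 \<le> ?w y * (sinkhorn_map v y - v y)"
    using le KTu_u_upd_pos[of v, OF v_pos] by (simp add: less_imp_le)
  ultimately have "?w y * (sinkhorn_map v y - v y) = 0"
    using sum_nonneg_eq_0_iff[of UNIV "\<lambda>y. ?w y * (sinkhorn_map v y - v y)"] by simp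
  then show ?thesis using KTu_u_upd_pos[of v y, OF v_pos] by simp
qed

text \<open>\<open>v \<mapsto> \<Sum>\<^sub>x \<mu> x ln (K v) x\<close> is concave with gradient \<open>K\<^sup>Tu\<close>, \<open>u = \<mu> / K v\<close>.\<close>

lemma sum_ln_Kv_le_tangent:
  assumes v_pos: "\<And>y. v y > 0" and v'_pos: "\<And>y. v' y > 0"
  shows "(\<Sum>x\<in>UNIV. \<mu> x * ln (Kv v' x))
    \<le> (\<Sum>x\<in>UNIV. \<mu> x * ln (Kv v x)) + (\<Sum>y\<in>UNIV. KTu (u_upd \<mu> K v) y * (v' y - v y))"
proof -
  let ?u = "u_upd \<mu> K v"
  have "\<mu> x * ln (Kv v' x) \<le> \<mu> x * ln (Kv v x) + ?u x * (Kv v' x - Kv v x)" for x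
  proof -
    have pos: "Kv v' x > 0" "Kv v x > 0" using Kv_pos v_pos v'_pos by auto
    have "ln (Kv v' x) - ln (Kv v x) = ln (Kv v' x / Kv v x)" using pos by (simp add: ln_div)
    also have "\<dots> \<le> Kv v' x / Kv v x - 1" using pos by (intro ln_le_minus_one) simp
    finally have "\<mu> x * (ln (Kv v' x) - ln (Kv v x)) \<le> \<mu> x * (Kv v' x / Kv v x - 1)"
      using \<mu>_pos[of x] by (simp add: mult_left_mono)
    also have "\<dots> = ?u x * (Kv v' x - Kv v x)"
      unfolding u_upd_eq using pos by (simp add: field_simps)
    finally show ?thesis by (simp add: algebra_simps)
  qed
  then have "(\<Sum>x\<in>UNIV. \<mu> x * ln (Kv v' x))
      \<le> (\<Sum>x\<in>UNIV. \<mu> x * ln (Kv v x)) + ((\<Sum>x\<in>UNIV. ?u x * Kv v' x) - (\<Sum>x\<in>UNIV. ?u x * Kv v x))"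
    by (simp add: sum_mono sum.distrib[symmetric] right_diff_distrib sum_subtractf[symmetric])
  also have "\<dots> = (\<Sum>x\<in>UNIV. \<mu> x * ln (Kv v x)) + (\<Sum>y\<in>UNIV. KTu ?u y * (v' y - v y))"
    by (simp add: sum_KTu_mult[symmetric] right_diff_distrib sum_subtractf)
  finally show ?thesis .
qed

text \<open>
  The tangent bound gives \<open>\<Phi> v' - \<Phi> v \<le> \<Sum>\<^sub>y g y\<close>; \<open>g\<close> vanishes where the step leaves \<open>v\<close>
  unchanged and is negative elsewhere by \<open>ln z < z - 1\<close>, since \<open>K\<^sup>Tu \<cdot> T v = \<nu>\<close>.
\<close>

lemma dual_potential_min_step_less:
  assumes v_pos: "\<And>y. v y > 0" and y0: "sinkhorn_map v y0 < v y0"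
  shows "dual_potential (\<lambda>y. min (v y) (sinkhorn_map v y)) < dual_potential v"
proof -
  define v' where "v' = (\<lambda>y. min (v y) (sinkhorn_map v y))"
  define w where "w = KTu (u_upd \<mu> K v)"
  define g where "g y = w y * (v' y - v y) - \<nu> y * (ln (v' y) - ln (v y))" for y
  have v'_pos: "v' y > 0" for y using v_pos sinkhorn_map_pos[of v, OF v_pos] by (simp add: v'_def)
  have g_neg: "g y < 0" if less: "sinkhorn_map v y < v y" for y
  proof -
    have Tv_pos: "sinkhorn_map v y > 0" using sinkhorn_map_pos[of v, OF v_pos] .
    have "ln (v y) - ln (sinkhorn_map v y) = ln (v y / sinkhorn_map v y)"
      using Tv_pos v_pos[of y] by (simp add: ln_div)
    also have "\<dots> < v y / sinkhorn_map v y - 1" using less Tv_pos by (intro ln_less_minus_one) simp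
    finally have "\<nu> y * (ln (v y) - ln (sinkhorn_map v y)) < \<nu> y * (v y / sinkhorn_map v y - 1)"
      using \<nu>_pos[of y] by (simp add: mult_strict_left_mono)
    also have "\<dots> = w y * v y - w y * sinkhorn_map v y"
      using Tv_pos KTu_mult_sinkhorn_map[of v y, OF v_pos, symmetric] by (simp add: w_def field_simps)
    finally show ?thesis using less by (simp add: g_def v'_def algebra_simps)
  qed
  have g_nonpos: "g y \<le> 0" for y
  proof (cases "sinkhorn_map v y < v y")
    case True
    then show ?thesis using g_neg by (simp add: less_imp_le)
  next
    case False
    then have "v' y = v y" by (simp add: v'_def)
    then show ?thesis by (simp add: g_def)
  qed
  have "(\<Sum>y\<in>UNIV. g y) = g y0 + (\<Sum>y\<in>UNIV - {y0}. g y)"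
    by (simp add: sum.remove)
  also have "\<dots> < 0" using g_neg[OF y0] sum_nonpos[of "UNIV - {y0}" g] g_nonpos by force
  finally have "(\<Sum>y\<in>UNIV. g y) < 0" .
  moreover have "dual_potential v' - dual_potential v \<le> (\<Sum>y\<in>UNIV. g y)"
    using sum_ln_Kv_le_tangent[of v v', OF v_pos v'_pos]
    unfolding dual_potential_def g_def w_def by (simp add: sum_subtractf right_diff_distrib)
  ultimately show ?thesis by (simp add: v'_def)
qed

lemma dual_potential_scale:
  assumes v_pos: "\<And>y. v y > 0" and "t > 0"
  shows "dual_potential (\<lambda>y. v y / t) = dual_potential v"
proof -
  have "\<mu> x * ln (Kv (\<lambda>y. v y / t) x) = \<mu> x * ln (Kv v x) - \<mu> x * ln t" for x
    using Kv_pos[of v x, OF v_pos] \<open>t > 0\<close>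
    by (simp add: Kv_def sum_divide_distrib[symmetric] ln_div right_diff_distrib)
  moreover have "\<nu> y * ln (v y / t) = \<nu> y * ln (v y) - \<nu> y * ln t" for y
    using v_pos[of y] \<open>t > 0\<close> by (simp add: ln_div right_diff_distrib)
  ultimately show ?thesis
    unfolding dual_potential_def
    by (simp add: sum_subtractf sum_distrib_right[symmetric] \<mu>_sum \<nu>_sum)
qed

definition dual_potential_bound :: real where
  "dual_potential_bound = Min (range (\<lambda>y. \<Sum>x\<in>UNIV. \<mu> x * ln (K x y)))"

lemma dual_potential_ge_bound:
  assumes v_pos: "\<And>y. v y > 0" and le1: "\<And>y. v y \<le> 1" and y1: "v y1 = 1"
  shows "dual_potential_bound - \<nu> y0 * ln (v y0) \<le> dual_potential v"
proof -
  have "K x y1 * v y1 \<le> Kv v x" for x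
    unfolding Kv_def by (rule member_le_sum) (auto intro: less_imp_le mult_pos_pos K_pos v_pos)
  then have "K x y1 \<le> Kv v x" for x using y1 by simp
  then have "ln (K x y1) \<le> ln (Kv v x)" for x
    using K_pos[of x y1] by (subst ln_le_cancel_iff) (auto intro: less_le_trans)
  then have "(\<Sum>x\<in>UNIV. \<mu> x * ln (K x y1)) \<le> (\<Sum>x\<in>UNIV. \<mu> x * ln (Kv v x))"
    using \<mu>_pos by (intro sum_mono mult_left_mono) (auto intro: less_imp_le)
  moreover have "dual_potential_bound \<le> (\<Sum>x\<in>UNIV. \<mu> x * ln (K x y1))"
    unfolding dual_potential_bound_def by (rule Min_le) auto
  moreover have "(\<Sum>y\<in>UNIV - {y0}. \<nu> y * ln (v y)) \<le> 0"
    using v_pos le1 \<nu>_pos by (intro sum_nonpos mult_nonneg_nonpos) (auto intro: less_imp_le)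
  then have "(\<Sum>y\<in>UNIV. \<nu> y * ln (v y)) \<le> \<nu> y0 * ln (v y0)"
    by (simp add: sum.remove[of UNIV y0])
  ultimately show ?thesis unfolding dual_potential_def by simp
qed

lemma continuous_on_dual_potential: "continuous_on {v. \<forall>y. v y > 0} dual_potential"
proof -
  let ?P = "{v. \<forall>y. v y > 0}"
  have coord: "continuous_on ?P (\<lambda>v. v y)" for y :: 'y
    by (rule continuous_on_subset[OF continuous_on_product_coordinates]) simp
  have "continuous_on ?P (\<lambda>v. Kv v x)" for x
    unfolding Kv_def by (intro continuous_intros coord)
  then show ?thesis
    unfolding dual_potential_def
    by (intro continuous_intros coord) (auto simp: Kv_pos less_imp_neq[symmetric])
qed

lemma dual_potential_normalize:
  assumes v_pos: "\<And>y. v y > 0"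
  shows "\<exists>v' y1. (\<forall>y. v' y > 0 \<and> v' y \<le> 1) \<and> v' y1 = 1 \<and> dual_potential v' = dual_potential v"
proof -
  define m where "m = Max (range v)"
  have "m \<in> range v" unfolding m_def by (rule Max_in) auto
  then obtain y1 where y1: "v y1 = m" by auto
  have m_pos: "m > 0" using y1 v_pos by metis
  have "v y / m \<le> 1" for y
    using m_pos Max_ge[of "range v" "v y"] by (simp add: m_def)
  moreover have "dual_potential (\<lambda>y. v y / m) = dual_potential v"
    by (rule dual_potential_scale[of v m, OF v_pos m_pos])
  ultimately show ?thesis
    using v_pos m_pos y1 by (intro exI[of _ "\<lambda>y. v y / m"] exI[of _ y1]) auto
qed

lemma dual_potential_sublevel_ge:
  assumes v_pos: "\<And>y. v y > 0" and le1: "\<And>y. v y \<le> 1" and y1: "v y1 = 1"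
    and sublevel: "dual_potential v \<le> dual_potential (\<lambda>_. 1)"
  shows "exp ((dual_potential_bound - dual_potential (\<lambda>_. 1)) / \<nu> y) \<le> v y"
proof -
  have "dual_potential_bound - \<nu> y * ln (v y) \<le> dual_potential (\<lambda>_. 1)"
    using dual_potential_ge_bound[of v y1 y, OF v_pos le1 y1] sublevel by simp
  then have "(dual_potential_bound - dual_potential (\<lambda>_. 1)) / \<nu> y \<le> ln (v y)"
    using \<nu>_pos[of y] by (simp add: divide_le_eq mult.commute)
  then show ?thesis using v_pos[of y] by (metis exp_le_cancel_iff exp_ln)
qed

text \<open>
  By scale invariance it suffices to compare with normalised vectors (maximum 1); those in the
  sublevel set of the constant vector 1 lie in a compact box bounded away from 0.
\<close>

lemma dual_potential_attains_min:
  "\<exists>w. (\<forall>y. w y > 0) \<and> (\<forall>v. (\<forall>y. v y > 0) \<longrightarrow> dual_potential w \<le> dual_potential v)"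
proof -
  define \<delta> where
    "\<delta> = min 1 (Min (range (\<lambda>y. exp ((dual_potential_bound - dual_potential (\<lambda>_. 1)) / \<nu> y))))"
  define S where "S = PiE (UNIV::'y set) (\<lambda>_. {\<delta>..1})"
  have \<delta>_pos: "\<delta> > 0" unfolding \<delta>_def by (auto simp: Min_gr_iff)
  have \<delta>_le: "\<delta> \<le> exp ((dual_potential_bound - dual_potential (\<lambda>_. 1)) / \<nu> y)" for y
    unfolding \<delta>_def by (rule min.coboundedI2, rule Min_le) auto
  have mem_S: "v \<in> S \<longleftrightarrow> (\<forall>y. \<delta> \<le> v y \<and> v y \<le> 1)" for v
    by (simp add: S_def PiE_iff)
  have one_S: "(\<lambda>_. 1) \<in> S" using \<delta>_def by (simp add: mem_S)
  have S_pos: "S \<subseteq> {v. \<forall>y. v y > 0}"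
    using \<delta>_pos mem_S by (simp add: subset_iff) (meson less_le_trans)
  have "compact S" unfolding S_def by (rule compact_function_box)
  then obtain w where w_S: "w \<in> S" and w_min: "\<And>v. v \<in> S \<Longrightarrow> dual_potential w \<le> dual_potential v"
    using continuous_attains_inf[OF _ _ continuous_on_subset[OF continuous_on_dual_potential S_pos]] one_S
    by blast
  have "dual_potential w \<le> dual_potential v" if v_pos: "\<forall>y. v y > 0" for v
  proof -
    have "\<exists>v' y1. (\<forall>y. v' y > 0 \<and> v' y \<le> 1) \<and> v' y1 = 1 \<and> dual_potential v' = dual_potential v"
      using v_pos by (intro dual_potential_normalize) simp
    then obtain v' y1 where v'_pos: "\<And>y. v' y > 0" and v'_le1: "\<And>y. v' y \<le> 1" and v'_y1: "v' y1 = 1"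
      and same: "dual_potential v' = dual_potential v"
      by blast
    show ?thesis
    proof (cases "dual_potential v' \<le> dual_potential (\<lambda>_. 1)")
      case True
      then have "v' \<in> S"
        using dual_potential_sublevel_ge[of v' y1, OF v'_pos v'_le1 v'_y1] \<delta>_le v'_le1
        by (auto simp: mem_S intro: order_trans)
      then show ?thesis using w_min same by fastforce
    next
      case False
      then show ?thesis using w_min[OF one_S] same by simp
    qed
  qed
  then show ?thesis using S_pos w_S by blast
qed

lemma sinkhorn_map_has_fixed_point:
  "\<exists>w. (\<forall>y. w y > 0) \<and> (\<forall>y. sinkhorn_map w y = w y)"
proof -
  obtain w where w_pos: "\<And>y. w y > 0"
    and w_min: "\<And>v. \<forall>y. v y > 0 \<Longrightarrow> dual_potential w \<le> dual_potential v"
    using dual_potential_attains_min by blast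
  have "w y \<le> sinkhorn_map w y" for y
  proof (rule ccontr)
    assume "\<not> w y \<le> sinkhorn_map w y"
    then have "dual_potential (\<lambda>y. min (w y) (sinkhorn_map w y)) < dual_potential w"
      using dual_potential_min_step_less[of w y, OF w_pos] by simp
    then show False
      using w_min[of "\<lambda>y. min (w y) (sinkhorn_map w y)"] w_pos sinkhorn_map_pos[of w, OF w_pos] by simp
  qed
  then show ?thesis using w_pos sinkhorn_map_fixed_if_le[of w, OF w_pos] by blast
qed

lemma async_v_Suc_eq:
  "async_v \<mu> \<nu> K v0 (Suc l) y = min (async_v \<mu> \<nu> K v0 l y) (sinkhorn_map (async_v \<mu> \<nu> K v0 l) y)"
  by (simp add: sinkhorn_map_def Let_def)

lemma async_v_ge_fixed_point:
  assumes w_pos: "\<And>y. w y > 0" and w_fixed: "\<And>y. sinkhorn_map w y = w y"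
    and "t > 0" and v0_ge: "\<And>y. t * w y \<le> v0 y"
  shows "t * w y \<le> async_v \<mu> \<nu> K v0 l y"
proof (induction l arbitrary: y)
  case 0
  then show ?case using v0_ge by simp
next
  case (Suc l)
  have "t * w y = sinkhorn_map (\<lambda>y. t * w y) y"
    using sinkhorn_map_scale[OF \<open>t > 0\<close>, of w y] w_fixed by simp
  also have "\<dots> \<le> sinkhorn_map (async_v \<mu> \<nu> K v0 l) y"
    using w_pos \<open>t > 0\<close> by (intro sinkhorn_map_mono Suc.IH) simp
  finally show ?case unfolding async_v_Suc_eq using Suc.IH[of y] by simp
qed

lemma tendsto_u_upd:
  assumes "\<And>y. (\<lambda>l. V l y) \<longlonglongrightarrow> v y" and "\<And>y. v y > 0"
  shows "(\<lambda>l. u_upd \<mu> K (V l) x) \<longlonglongrightarrow> u_upd \<mu> K v x"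
  using Kv_pos[of v x] assms unfolding u_upd_eq Kv_def
  by (intro tendsto_intros) auto

lemma tendsto_sinkhorn_map:
  assumes "\<And>y. (\<lambda>l. V l y) \<longlonglongrightarrow> v y" and "\<And>y. v y > 0"
  shows "(\<lambda>l. sinkhorn_map (V l) y) \<longlonglongrightarrow> sinkhorn_map v y"
  using KTu_u_upd_pos[of v y] assms unfolding sinkhorn_map_eq KTu_def
  by (intro tendsto_intros tendsto_u_upd) auto

lemma async_v_tendsto_pos:
  assumes v0_pos: "\<And>y. v0 y > 0"
  shows "\<exists>v. (\<forall>y. v y > 0) \<and> (\<forall>y. (\<lambda>l. async_v \<mu> \<nu> K v0 l y) \<longlonglongrightarrow> v y)"
proof -
  define vs where "vs = async_v \<mu> \<nu> K v0"
  obtain w where w_pos: "\<And>y. w y > 0" and w_fixed: "\<And>y. sinkhorn_map w y = w y"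
    using sinkhorn_map_has_fixed_point by blast
  define t where "t = Min (range (\<lambda>y. v0 y / w y))"
  have t_pos: "t > 0" unfolding t_def using v0_pos w_pos by (auto simp: Min_gr_iff)
  have "t * w y \<le> v0 y" for y
  proof -
    have "t \<le> v0 y / w y" unfolding t_def by (rule Min_le) auto
    then show ?thesis using w_pos[of y] by (simp add: pos_le_divide_eq)
  qed
  then have lower: "t * w y \<le> vs l y" for l y
    unfolding vs_def by (rule async_v_ge_fixed_point[of w t v0, OF w_pos w_fixed t_pos])
  have convergent: "convergent (\<lambda>l. vs l y)" for y
  proof (rule decseq_convergent)
    show "decseq (\<lambda>l. vs l y)"
      unfolding vs_def by (rule decseq_SucI) (simp only: async_v_Suc_eq min.cobounded1)
    show "\<forall>l. t * w y \<le> vs l y" using lower by blast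
  qed (rule convergentI)
  define v where "v y = lim (\<lambda>l. vs l y)" for y
  have lim: "(\<lambda>l. vs l y) \<longlonglongrightarrow> v y" for y
    unfolding v_def using convergent by (simp add: convergent_LIMSEQ_iff)
  have "t * w y \<le> v y" for y
    by (rule LIMSEQ_le_const[OF lim]) (use lower in blast)
  then have "v y > 0" for y using t_pos w_pos[of y] by (smt (verit) mult_pos_pos)
  then show ?thesis using lim unfolding vs_def by blast
qed

lemma async_v_limit_fixed:
  assumes lim: "\<And>y. (\<lambda>l. async_v \<mu> \<nu> K v0 l y) \<longlonglongrightarrow> v y" and v_pos: "\<And>y. v y > 0"
  shows "sinkhorn_map v y = v y"
proof -
  have "v y \<le> sinkhorn_map v y" for y
  proof -
    have "(\<lambda>l. async_v \<mu> \<nu> K v0 (Suc l) y) \<longlonglongrightarrow> min (v y) (sinkhorn_map v y)"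
      unfolding async_v_Suc_eq
      by (intro tendsto_min lim tendsto_sinkhorn_map[of "async_v \<mu> \<nu> K v0" v, OF lim v_pos])
    moreover have "(\<lambda>l. async_v \<mu> \<nu> K v0 (Suc l) y) \<longlonglongrightarrow> v y"
      using lim by (rule LIMSEQ_Suc)
    ultimately have "min (v y) (sinkhorn_map v y) = v y" by (rule LIMSEQ_unique)
    then show ?thesis by (metis min.absorb_iff1)
  qed
  then show ?thesis by (rule sinkhorn_map_fixed_if_le[of v, OF v_pos])
qed

theorem async_sinkhorn_converges:
  assumes v0_pos: "\<And>y. v0 y > 0"
  shows "\<exists>u v. (\<forall>x. u x > 0) \<and> (\<forall>y. v y > 0)
     \<and> (\<forall>x. (\<Sum>y\<in>UNIV. u x * K x y * v y) = \<mu> x)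
     \<and> (\<forall>y. (\<Sum>x\<in>UNIV. u x * K x y * v y) = \<nu> y)
     \<and> (\<forall>x. (\<lambda>l. async_u \<mu> \<nu> K v0 l x) \<longlonglongrightarrow> u x)
     \<and> (\<forall>y. (\<lambda>l. async_v \<mu> \<nu> K v0 l y) \<longlonglongrightarrow> v y)
     \<and> (\<lambda>l. async_q \<mu> \<nu> K v0 l) \<longlonglongrightarrow> 1"
proof -
  obtain v where v_pos: "\<And>y. v y > 0" and lim_v: "\<And>y. (\<lambda>l. async_v \<mu> \<nu> K v0 l y) \<longlonglongrightarrow> v y"
    using async_v_tendsto_pos[of v0, OF v0_pos] by blast
  have v_fixed: "sinkhorn_map v y = v y" for y by (rule async_v_limit_fixed[of v0 v, OF lim_v v_pos])
  define u where "u = u_upd \<mu> K v"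
  have u_pos: "u x > 0" for x unfolding u_def by (rule u_upd_pos[of v, OF v_pos])
  have row: "(\<Sum>y\<in>UNIV. u x * K x y * v y) = \<mu> x" for x
    using u_upd_mult_Kv[of v x, OF v_pos]
    by (simp add: u_def Kv_def sum_distrib_left mult.assoc)
  have col: "(\<Sum>x\<in>UNIV. u x * K x y * v y) = \<nu> y" for y
    using KTu_mult_sinkhorn_map[of v y, OF v_pos]
    by (simp add: u_def v_fixed KTu_def sum_distrib_left mult_ac)
  have lim_u: "(\<lambda>l. async_u \<mu> \<nu> K v0 l x) \<longlonglongrightarrow> u x" for x
    unfolding async_u_def u_def by (rule tendsto_u_upd[of "async_v \<mu> \<nu> K v0" v, OF lim_v v_pos])
  have "(\<lambda>l. async_q \<mu> \<nu> K v0 l) \<longlonglongrightarrow> (\<Sum>x\<in>UNIV. \<Sum>y\<in>UNIV. u x * K x y * v y)"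
    unfolding async_q_def by (intro tendsto_intros lim_u lim_v[THEN LIMSEQ_Suc])
  then have lim_q: "(\<lambda>l. async_q \<mu> \<nu> K v0 l) \<longlonglongrightarrow> 1" using row \<mu>_sum by simp
  show ?thesis
    by (intro exI[of _ u] exI[of _ v] conjI allI u_pos v_pos row col lim_u lim_v lim_q)
qed

end

theorem mainTheorem5:
  fixes \<mu> :: "'x::finite \<Rightarrow> real" and \<nu> :: "'y::finite \<Rightarrow> real"
    and c :: "'x \<Rightarrow> 'y \<Rightarrow> real" and \<epsilon> :: real and v0 :: "'y \<Rightarrow> real"
  assumes \<mu>_pos: "\<And>x. \<mu> x > 0" and \<mu>_sum: "(\<Sum>x\<in>UNIV. \<mu> x) = 1"
    and \<nu>_pos: "\<And>y. \<nu> y > 0" and \<nu>_sum: "(\<Sum>y\<in>UNIV. \<nu> y) = 1"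
    and c_nonneg: "\<And>x y. c x y \<ge> 0"
    and \<epsilon>_pos: "\<epsilon> > 0"
    and v0_pos: "\<And>y. v0 y > 0"
  shows "\<exists>u v. (\<forall>x. u x > 0) \<and> (\<forall>y. v y > 0)
     \<and> (\<forall>x. (\<Sum>y\<in>UNIV. u x * kernel \<mu> \<nu> c \<epsilon> x y * v y) = \<mu> x)
     \<and> (\<forall>y. (\<Sum>x\<in>UNIV. u x * kernel \<mu> \<nu> c \<epsilon> x y * v y) = \<nu> y)
     \<and> (\<forall>x. (\<lambda>l. async_u \<mu> \<nu> (kernel \<mu> \<nu> c \<epsilon>) v0 l x) \<longlonglongrightarrow> u x)
     \<and> (\<forall>y. (\<lambda>l. async_v \<mu> \<nu> (kernel \<mu> \<nu> c \<epsilon>) v0 l y) \<longlonglongrightarrow> v y)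
     \<and> (\<lambda>l. async_q \<mu> \<nu> (kernel \<mu> \<nu> c \<epsilon>) v0 l) \<longlonglongrightarrow> 1"
proof -
  interpret sinkhorn_scaling \<mu> \<nu> "kernel \<mu> \<nu> c \<epsilon>"
    by unfold_locales (auto simp: kernel_def \<mu>_pos \<nu>_pos \<mu>_sum \<nu>_sum)
  show ?thesis by (rule async_sinkhorn_converges[of v0, OF v0_pos])
qed

end
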